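(* Let $x_1,\dots,x_k\ge0$ be real numbers and let $2n$ be a nonnegative even integer. Then $$\sum_{2m_1+\cdots+2m_k=2n}\binom{2n}{2m_1,\dots,2m_k}x_1^{2m_1}\cdots x_k^{2m_k}\ \ge\ \frac{1}{2^{k-1}}\Big(\sum_{i=1}^kx_i\Big)^{2n},$$ where the sum is over all $k$-tuples of nonnegative integers $(m_1,\dots,m_k)$ with $2m_1+\cdots+2m_k=2n$. *)

theory Defs
  imports "HOL-Analysis.Analysis"
begin

definition multinomial :: "nat \<Rightarrow> nat \<Rightarrow> (nat \<Rightarrow> nat) \<Rightarrow> nat" where
  "multinomial N k a = fact N div (\<Prod>i<k. fact (a i))"

definition even_tuples :: "nat \<Rightarrow> nat \<Rightarrow> (nat \<Rightarrow> nat) set" where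
  "even_tuples k n = {m. (\<forall>i\<ge>k. m i = 0) \<and> (\<Sum>i<k. 2 * m i) = 2 * n}"

end

theory Submission
  imports Defs
begin

text \<open>Let T(k, n) be the left-hand side. Splitting off the exponent 2j of the last variable
  gives T(k+1, n) = \<Sum>j C(2n, 2j) T(k, n-j) x_k^(2j), and the even part of the binomial expansion
  satisfies \<Sum>j C(2n, 2j) a^(2n-2j) b^(2j) = ((a+b)^(2n) + (a-b)^(2n))/2 \<ge> (a+b)^(2n)/2.
  Hence each new variable costs one factor 1/2. Only even powers occur, so the bound holds
  without the sign condition on the x_i.\<close>

lemma prod_fact_dvd_fact_sum:
  fixes a :: "nat \<Rightarrow> nat"
  shows "(\<Prod>i<k. fact (a i) :: nat) dvd fact (\<Sum>i<k. a i)"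
proof (induction k)
  case 0
  then show ?case by simp
next
  case (Suc k)
  have "(\<Prod>i<Suc k. fact (a i) :: nat) = (\<Prod>i<k. fact (a i)) * fact (a k)" by simp
  also have "\<dots> dvd fact (\<Sum>i<k. a i) * fact (a k)" using Suc by (simp add: mult_dvd_mono)
  also have "\<dots> dvd fact ((\<Sum>i<k. a i) + a k)" by (rule fact_fact_dvd_fact)
  finally show ?case by (simp add: add.commute)
qed

lemma of_nat_multinomial:
  assumes "(\<Sum>i<k. a i) = N"
  shows "(of_nat (multinomial N k a) :: 'a::field_char_0) = fact N / (\<Prod>i<k. fact (a i))"
proof -
  have "(\<Prod>i<k. fact (a i) :: nat) dvd fact N"
    using prod_fact_dvd_fact_sum[of a k] assms by simp
  then show ?thesis
    unfolding multinomial_def by (simp add: of_nat_of_nat_div of_nat_prod)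
qed

lemma even_tuples_0: "even_tuples 0 n = (if n = 0 then {\<lambda>_. 0} else {})"
  by (auto simp: even_tuples_def)

lemma bij_betw_even_tuples_Suc:
  "bij_betw (\<lambda>(j, m). m(k := j)) (SIGMA j:{..n}. even_tuples k (n - j)) (even_tuples (Suc k) n)"
proof -
  have vanish_at_k: "m k = 0" if "m \<in> even_tuples k l" for m l
    using that by (simp add: even_tuples_def)
  have sum_upd: "(\<Sum>i<k. 2 * (m(k := j)) i) = (\<Sum>i<k. 2 * m i)" for m :: "nat \<Rightarrow> nat" and j
    by (rule sum.cong) auto
  have "inj_on (\<lambda>(j, m). m(k := j)) (SIGMA j:{..n}. even_tuples k (n - j))"
  proof (rule inj_onI, clarify)
    fix j m j' m'
    assume "m \<in> even_tuples k (n - j)" "m' \<in> even_tuples k (n - j')"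
      and upd: "m(k := j) = m'(k := j')"
    then have "m k = 0" "m' k = 0" by (auto intro: vanish_at_k)
    then show "j = j' \<and> m = m'"
      using upd by (metis fun_upd_same fun_upd_upd fun_upd_triv)
  qed
  moreover have "m \<in> (\<lambda>(j, m). m(k := j)) ` (SIGMA j:{..n}. even_tuples k (n - j))"
    if "m \<in> even_tuples (Suc k) n" for m
  proof -
    have "\<forall>i\<ge>Suc k. m i = 0" and sum: "(\<Sum>i<k. 2 * m i) + 2 * m k = 2 * n"
      using that by (auto simp: even_tuples_def)
    then have "m(k := 0) \<in> even_tuples k (n - m k)"
      unfolding even_tuples_def using sum_upd[of m 0] by (auto simp: Suc_le_eq)
    moreover have "m k \<le> n" using sum by linarith
    ultimately show ?thesis
      by (auto intro!: image_eqI[where x="(m k, m(k := 0))"])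
  qed
  moreover have "m(k := j) \<in> even_tuples (Suc k) n"
    if "j \<le> n" "m \<in> even_tuples k (n - j)" for j m
    using that sum_upd[of m j] by (auto simp: even_tuples_def)
  ultimately show ?thesis
    unfolding bij_betw_def by fast
qed

lemma finite_even_tuples: "finite (even_tuples k n)"
proof (induction k arbitrary: n)
  case 0
  then show ?case by (simp add: even_tuples_0)
next
  case (Suc k)
  then show ?case
    using bij_betw_finite[OF bij_betw_even_tuples_Suc[of k n]] by auto
qed

definition even_multinomial_sum :: "(nat \<Rightarrow> 'a::field_char_0) \<Rightarrow> nat \<Rightarrow> nat \<Rightarrow> 'a" where
  "even_multinomial_sum x k n =
     (\<Sum>m\<in>even_tuples k n. fact (2 * n) / (\<Prod>i<k. fact (2 * m i)) * (\<Prod>i<k. x i ^ (2 * m i)))"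

lemma even_multinomial_sum_0: "even_multinomial_sum x 0 n = (if n = 0 then 1 else 0)"
  unfolding even_multinomial_sum_def even_tuples_0 by simp

lemma even_multinomial_sum_Suc:
  "even_multinomial_sum x (Suc k) n =
     (\<Sum>j\<le>n. of_nat (2 * n choose (2 * j)) * even_multinomial_sum x k (n - j) * x k ^ (2 * j))"
proof -
  let ?term = "\<lambda>k n m. fact (2 * n) / (\<Prod>i<k. fact (2 * m i)) * (\<Prod>i<k. x i ^ (2 * m i))"
  have split_last:
    "?term (Suc k) n (m(k := j)) = of_nat (2 * n choose (2 * j)) * ?term k (n - j) m * x k ^ (2 * j)"
    if "j \<le> n" for j m
  proof -
    have "of_nat (2 * n choose (2 * j)) = fact (2 * n) / (fact (2 * j) * fact (2 * (n - j)) :: 'a)"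
      using binomial_fact[of "2 * j" "2 * n"] that by (simp add: diff_mult_distrib2)
    moreover have "(\<Prod>i<k. fact (2 * m i) :: 'a) \<noteq> 0" by simp
    ultimately show ?thesis by (simp add: field_simps)
  qed
  have "even_multinomial_sum x (Suc k) n =
      (\<Sum>(j, m)\<in>(SIGMA j:{..n}. even_tuples k (n - j)). ?term (Suc k) n (m(k := j)))"
    unfolding even_multinomial_sum_def
    using sum.reindex_bij_betw[OF bij_betw_even_tuples_Suc[of k n], of "?term (Suc k) n"]
    by (simp add: case_prod_unfold)
  also have "\<dots> = (\<Sum>j\<le>n. \<Sum>m\<in>even_tuples k (n - j). ?term (Suc k) n (m(k := j)))"
    by (rule sum.Sigma[symmetric]) (auto simp: finite_even_tuples)
  also have "\<dots> = (\<Sum>j\<le>n. \<Sum>m\<in>even_tuples k (n - j).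
      of_nat (2 * n choose (2 * j)) * ?term k (n - j) m * x k ^ (2 * j))"
    by (intro sum.cong refl split_last) simp
  also have "\<dots> =
      (\<Sum>j\<le>n. of_nat (2 * n choose (2 * j)) * even_multinomial_sum x k (n - j) * x k ^ (2 * j))"
    unfolding even_multinomial_sum_def by (simp add: sum_distrib_left sum_distrib_right)
  finally show ?thesis .
qed

lemma even_multinomial_sum_Suc_0: "even_multinomial_sum x (Suc 0) n = x 0 ^ (2 * n)"
proof -
  have "even_multinomial_sum x (Suc 0) n = (\<Sum>j\<le>n. if j = n then x 0 ^ (2 * j) else 0)"
    unfolding even_multinomial_sum_Suc even_multinomial_sum_0 by (rule sum.cong) auto
  then show ?thesis by simp
qed

lemma sum_atMost_double:
  fixes g :: "nat \<Rightarrow> 'a::comm_monoid_add"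
  shows "(\<Sum>i\<le>2 * n. g i) = (\<Sum>j\<le>n. g (2 * j)) + (\<Sum>j<n. g (2 * j + 1))"
proof (induction n)
  case 0
  then show ?case by simp
next
  case (Suc n)
  have "(\<Sum>i\<le>2 * Suc n. g i) = (\<Sum>i\<le>2 * n. g i) + g (2 * n + 1) + g (2 * n + 2)"
    by (simp add: sum.atMost_Suc)
  then show ?case
    using Suc by (simp add: sum.atMost_Suc sum.lessThan_Suc ac_simps)
qed

lemma binomial_even_part:
  fixes a b :: "'a::comm_ring_1"
  shows "2 * (\<Sum>j\<le>n. of_nat (2 * n choose (2 * j)) * a ^ (2 * (n - j)) * b ^ (2 * j))
           = (a + b) ^ (2 * n) + (a - b) ^ (2 * n)"
proof -
  define g where "g i = of_nat (2 * n choose i) * b ^ i * a ^ (2 * n - i) * (1 + (-1) ^ i)" for i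
  have "(a + b) ^ (2 * n) + (a - b) ^ (2 * n) = (b + a) ^ (2 * n) + (- b + a) ^ (2 * n)"
    by (simp add: add.commute)
  also have "\<dots> = (\<Sum>i\<le>2 * n. g i)"
    unfolding binomial_ring g_def
    by (simp add: sum.distrib[symmetric] power_mult_distrib power_minus[of b] algebra_simps)
  also have "\<dots> = (\<Sum>j\<le>n. g (2 * j)) + (\<Sum>j<n. g (2 * j + 1))"
    by (rule sum_atMost_double)
  also have "\<dots> = 2 * (\<Sum>j\<le>n. of_nat (2 * n choose (2 * j)) * a ^ (2 * (n - j)) * b ^ (2 * j))"
    unfolding g_def by (simp add: sum_distrib_left diff_mult_distrib2 algebra_simps)
  finally show ?thesis ..
qed

lemma binomial_even_part_ge:
  fixes a b :: "'a::linordered_field"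
  shows "(\<Sum>j\<le>n. of_nat (2 * n choose (2 * j)) * a ^ (2 * (n - j)) * b ^ (2 * j)) \<ge> (a + b) ^ (2 * n) / 2"
proof -
  have "0 \<le> (a - b) ^ (2 * n)" by simp
  then show ?thesis
    using binomial_even_part[of n a b] by (simp add: field_simps)
qed

lemma even_multinomial_sum_ge:
  fixes x :: "nat \<Rightarrow> 'a::linordered_field"
  shows "even_multinomial_sum x (Suc k) n \<ge> (\<Sum>i<Suc k. x i) ^ (2 * n) / 2 ^ k"
proof (induction k arbitrary: n)
  case 0
  then show ?case by (simp add: even_multinomial_sum_Suc_0)
next
  case (Suc k)
  define S where "S = (\<Sum>i<Suc k. x i)"
  have "(S + x (Suc k)) ^ (2 * n) / 2 ^ Suc k
      \<le> (\<Sum>j\<le>n. of_nat (2 * n choose (2 * j)) * S ^ (2 * (n - j)) * x (Suc k) ^ (2 * j)) / 2 ^ k"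
    using binomial_even_part_ge[of S "x (Suc k)" n] by (simp add: field_simps)
  also have "\<dots> = (\<Sum>j\<le>n. of_nat (2 * n choose (2 * j)) * (S ^ (2 * (n - j)) / 2 ^ k) * x (Suc k) ^ (2 * j))"
    by (simp add: sum_divide_distrib)
  also have "\<dots> \<le> even_multinomial_sum x (Suc (Suc k)) n"
    unfolding even_multinomial_sum_Suc[of x "Suc k"] S_def
    by (intro sum_mono mult_right_mono mult_left_mono Suc.IH) auto
  finally show ?case
    by (simp add: S_def)
qed

theorem lemma9:
  fixes x :: "nat \<Rightarrow> real" and k n :: nat
  assumes "k \<ge> 1"
    and "\<And>i. i < k \<Longrightarrow> x i \<ge> 0"
  shows "(\<Sum>m\<in>even_tuples k n.
            real (multinomial (2 * n) k (\<lambda>i. 2 * m i)) * (\<Prod>i<k. x i ^ (2 * m i)))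
         \<ge> (1 / 2 ^ (k - 1)) * (\<Sum>i<k. x i) ^ (2 * n)"
proof -
  obtain k' where k: "k = Suc k'" using assms(1) by (cases k) auto
  have "(\<Sum>m\<in>even_tuples k n.
            real (multinomial (2 * n) k (\<lambda>i. 2 * m i)) * (\<Prod>i<k. x i ^ (2 * m i)))
        = even_multinomial_sum x k n"
    unfolding even_multinomial_sum_def
    by (intro sum.cong refl) (simp add: of_nat_multinomial even_tuples_def)
  moreover have "even_multinomial_sum x k n \<ge> (\<Sum>i<k. x i) ^ (2 * n) / 2 ^ (k - 1)"
    using even_multinomial_sum_ge[of x k' n] k by simp
  ultimately show ?thesis by simp
qed

end
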